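(* Let $h$ and $k$ be relatively prime odd integers with $k>0$. Then $$B_{1}(h,k)=h\,s_{5}(h,k)+\frac{1}{2k}-\frac{1}{2}.$$
   Context: $[x]$ denotes the greatest integer $\le x$, and the sawtooth function is $((x))=x-[x]-\tfrac12$ if $x\notin\mathbb{Z}$ and $((x))=0$ if $x\in\mathbb{Z}$. For integers $h,k$ with $k>0$, $\gcd(h,k)=1$: $$B_{1}(h,k)=\sum_{j=1}^{k-1}(-1)^{j+\left[\frac{hj}{k}\right]}\left[\frac{hj}{k}\right],\qquad s_{5}(h,k)=\sum_{j \bmod k}(-1)^{j+\left[\frac{hj}{k}\right]}\left(\left(\frac{j}{k}\right)\right),$$ the latter sum over a complete residue system modulo $k$ (the Hardy–Berndt sum $s_5$). *)

theory Defs
  imports Complex_Main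
begin

definition sawtooth :: "real \<Rightarrow> real" where
  "sawtooth x = (if x \<in> \<int> then 0 else x - of_int \<lfloor>x\<rfloor> - 1/2)"

definition B1 :: "int \<Rightarrow> int \<Rightarrow> int" where
  "B1 h k = (\<Sum>j\<in>{1..k-1}. (-1) ^ nat \<bar>j + \<lfloor>h * j / k\<rfloor>\<bar> * \<lfloor>h * j / k\<rfloor>)"

definition s5 :: "int \<Rightarrow> int \<Rightarrow> real" where
  "s5 h k = (\<Sum>j\<in>{0..k-1}. (-1) ^ nat \<bar>j + \<lfloor>h * j / k\<rfloor>\<bar> * sawtooth (j / k))"

end

theory Submission
  imports Defs "HOL-Number_Theory.Modular_Inverse"
begin

text \<open>
  Write h j = k q_j + r_j with 0 \<le> r_j < k. As h and k are odd, the common sign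
  (-1)^(j + q_j) of both sums is (-1)^r_j, and q_j = h (j/k - 1/2) - (2 r_j - h k)/(2k).
  Summing over 0 < j < k gives B1 = h s5 - S/(2k) with S the sum of (-1)^r_j (2 r_j - h k).
  Since j \<mapsto> r_j permutes {1..k-1}, S is the sum of (-1)^r (2 r - h k) over 0 < r < k,
  whose (k-1)/2 consecutive pairs contribute 2 each; so S = k - 1.
\<close>

lemma even_add_div_iff_even_mod:
  fixes h k j :: int
  assumes "odd h" "odd k"
  shows "even (j + h * j div k) \<longleftrightarrow> even (h * j mod k)"
proof -
  have "h * j = k * (h * j div k) + h * j mod k" by simp
  then show ?thesis using assms by (metis even_add even_mult_iff)
qed

lemma minus_one_power_add_div:
  fixes h k j :: int
  assumes "odd h" "odd k" "k > 0"
  shows "(-1::'a::ring_1) ^ nat \<bar>j + h * j div k\<bar> = (-1) ^ nat (h * j mod k)"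
proof -
  have "h * j mod k \<ge> 0" using assms(3) by simp
  then have "even (nat \<bar>j + h * j div k\<bar>) \<longleftrightarrow> even (nat (h * j mod k))"
    using even_add_div_iff_even_mod[OF assms(1,2)] by (simp add: even_nat_iff)
  then show ?thesis by (simp add: minus_one_power_iff)
qed

lemma sawtooth_eq:
  assumes "0 < x" "x < 1"
  shows "sawtooth x = x - 1/2"
proof -
  have "\<lfloor>x\<rfloor> = 0" using assms by linarith
  moreover have "x \<notin> \<int>" using assms by (auto elim!: Ints_cases)
  ultimately show ?thesis by (simp add: sawtooth_def)
qed

lemma sum_alternating_linear:
  fixes c :: int
  shows "(\<Sum>r\<in>{1..2 * int m}. (-1) ^ nat r * (2 * r - c)) = 2 * int m"
proof (induction m)
  case 0
  then show ?case by simp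
next
  case (Suc m)
  have "{1..2 * int (Suc m)} = insert (2 * int m + 2) (insert (2 * int m + 1) {1..2 * int m})"
    by auto
  moreover have "(-1::int) ^ nat (2 * int m + 2) = 1" "(-1::int) ^ nat (2 * int m + 1) = -1"
    by (simp_all add: even_nat_iff minus_one_power_iff)
  ultimately show ?case using Suc by simp
qed

lemma sum_alternating_mult_mod:
  fixes h k c :: int
  assumes "odd k" "k > 0" "coprime h k"
  shows "(\<Sum>j\<in>{1..<k}. (-1) ^ nat (h * j mod k) * (2 * (h * j mod k) - c)) = k - 1"
proof -
  obtain t where "k = 2 * t + 1" using assms(1) by (rule oddE)
  moreover from this have "t \<ge> 0" using assms(2) by simp
  ultimately obtain m where m: "k - 1 = 2 * int m" by (metis add_diff_cancel_right' nonneg_int_cases)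
  have "(\<Sum>j\<in>{1..<k}. (-1) ^ nat (h * j mod k) * (2 * (h * j mod k) - c))
      = (\<Sum>r\<in>{1..<k}. (-1) ^ nat r * (2 * r - c))"
    using sum.reindex_bij_betw[OF bij_betw_int_remainders_mult[OF assms(3)],
        of "\<lambda>r. (-1) ^ nat r * (2 * r - c)"] .
  also have "\<dots> = (\<Sum>r\<in>{1..2 * int m}. (-1) ^ nat r * (2 * r - c))"
    using m by (intro sum.cong) auto
  finally show ?thesis using m sum_alternating_linear by simp
qed

lemma B1_eq_sum_mod:
  fixes h k :: int
  assumes "odd h" "odd k" "k > 0"
  shows "B1 h k = (\<Sum>j\<in>{1..<k}. (-1) ^ nat (h * j mod k) * (h * j div k))"
proof -
  have "{1..k-1} = {1..<k}" by auto
  then show ?thesis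
    unfolding B1_def floor_divide_of_int_eq
    by (simp add: minus_one_power_add_div[OF assms])
qed

lemma s5_eq_sum_mod:
  fixes h k :: int
  assumes "odd h" "odd k" "k > 0"
  shows "s5 h k = (\<Sum>j\<in>{1..<k}. (-1) ^ nat (h * j mod k) * (j / k - 1/2))"
proof -
  have "{0..k-1} = insert 0 {1..<k}" using assms(3) by auto
  then have "s5 h k = (\<Sum>j\<in>{1..<k}. (-1) ^ nat \<bar>j + h * j div k\<bar> * sawtooth (j / k))"
    unfolding s5_def floor_divide_of_int_eq by (simp add: sawtooth_def)
  also have "\<dots> = (\<Sum>j\<in>{1..<k}. (-1) ^ nat (h * j mod k) * (j / k - 1/2))"
  proof (rule sum.cong)
    fix j assume "j \<in> {1..<k}"
    then have "0 < real_of_int j / k" "real_of_int j / k < 1"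
      by (auto simp: divide_less_eq)
    then show "(-1) ^ nat \<bar>j + h * j div k\<bar> * sawtooth (j / k)
        = (-1) ^ nat (h * j mod k) * (j / k - 1/2)"
      by (simp add: sawtooth_eq minus_one_power_add_div[OF assms])
  qed simp
  finally show ?thesis .
qed

lemma of_int_mult_div_eq:
  fixes h k j :: int
  assumes "k \<noteq> 0"
  shows "real_of_int (h * j div k)
    = h * (j / k - 1/2) - (2 * (h * j mod k) - h * k) / (2 * k)"
proof -
  have "real_of_int (h * j div k) * k + real_of_int (h * j mod k) = h * j"
    by (metis div_mult_mod_eq of_int_add of_int_mult)
  then show ?thesis using assms by (simp add: field_simps)
qed

theorem theorem12:
  fixes h k :: int
  assumes "odd h" "odd k" "k > 0" "coprime h k"
  shows "real_of_int (B1 h k) = real_of_int h * s5 h k + 1 / (2 * real_of_int k) - 1 / 2"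
proof -
  define \<epsilon> where "\<epsilon> j = (-1::int) ^ nat (h * j mod k)" for j
  have "real_of_int (B1 h k) = (\<Sum>j\<in>{1..<k}. \<epsilon> j * real_of_int (h * j div k))"
    by (simp add: B1_eq_sum_mod[OF assms(1-3)] \<epsilon>_def)
  also have "\<dots> = (\<Sum>j\<in>{1..<k}. h * (\<epsilon> j * (j / k - 1/2))
      - real_of_int (\<epsilon> j * (2 * (h * j mod k) - h * k)) / (2 * k))"
    using assms(3) by (intro sum.cong) (simp_all add: of_int_mult_div_eq field_simps)
  also have "\<dots> = h * s5 h k
      - real_of_int (\<Sum>j\<in>{1..<k}. \<epsilon> j * (2 * (h * j mod k) - h * k)) / (2 * k)"
    by (simp add: s5_eq_sum_mod[OF assms(1-3)] \<epsilon>_def sum_subtractf sum_distrib_left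
        sum_divide_distrib)
  also have "\<dots> = h * s5 h k - (k - 1) / (2 * k)"
    using sum_alternating_mult_mod[OF assms(2-4)] by (simp add: \<epsilon>_def)
  also have "\<dots> = h * s5 h k + 1 / (2 * real_of_int k) - 1 / 2"
    using assms(3) by (simp add: field_simps)
  finally show ?thesis .
qed

end
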